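(* Consider a single advertising slot sold by the following hybrid auction. Each advertiser $j$ submits a bid pair $(m_j, c_j)$ with $m_j, c_j \ge 0$ (a per-impression bid and a per-click bid). The auctioneer has, for each advertiser $j$, a value $q_j > 0$ (the auctioneer index) that does not depend on any bids. The effective bid of advertiser $j$ is $R_j = \max(m_j, c_j q_j)$. The advertiser $j^*$ with the highest effective bid wins the slot; let $R_{-j^*}$ denote the highest effective bid among the other advertisers. If $m_{j^*} > c_{j^*} q_{j^*}$, the winner pays $R_{-j^*}$ per impression; otherwise the winner pays $R_{-j^*}/q_{j^*}$ per click. Let advertiser $j$ have true value $v_j > 0$ per click, and let $\mathcal{P}_j$ be advertiser $j$'s belief (prior distribution) about its click-through probability, with mean $p_j = \mathbb{E}[\mathcal{P}_j] > 0$. Suppose advertiser $j$ is myopic and risk-neutral, i.e. it maximizes its expected profit in the current step, where if it wins it receives expected value $p_j v_j$ and pays either the per-impression price or $p_j$ times the per-click price. Then, regardless of the value of $q_j$, bidding $(v_j p_j, v_j)$ is a strongly dominant strategy for advertiser $j$: for every $q_j>0$ and every value of the highest competing effective bid, it yields expected profit at least as large as any other bid pair, and for every other bid pair $(m_j,c_j)$ there exist values of $q_j$ and of the highest competing effective bid for which $(m_j,c_j)$ yields strictly smaller expected profit than $(v_j p_j, v_j)$.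
   Context: Single-slot auction; all notation is defined in the claim. Expected profit of a losing advertiser is $0$. *)

theory Defs
  imports Main "HOL.Real"
begin

definition eff_bid :: "real \<Rightarrow> real \<Rightarrow> real \<Rightarrow> real" where
  "eff_bid q m c = max m (c * q)"

text \<open>Expected (myopic, risk-neutral) profit of advertiser j with value v per click
  and mean click-through belief p, bidding (m, c), given auctioneer index q and
  highest competing effective bid r.  The advertiser wins iff its effective bid
  strictly exceeds r (ties are lost; losing gives profit 0).\<close>
definition exp_profit ::
  "real \<Rightarrow> real \<Rightarrow> real \<Rightarrow> real \<Rightarrow> real \<Rightarrow> real \<Rightarrow> real" where
  "exp_profit v p q r m c =
     (if eff_bid q m c > r then
        (if m > c * q then p * v - r else p * v - p * (r / q))
      else 0)"

end

theory Submission
  imports Defs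
begin

text \<open>A winning advertiser's expected profit is either \<open>p v - r\<close> (impression price) or
  \<open>p v - p r / q\<close> (click price), and a loser's is \<open>0\<close>.  The truthful bid always lands on the
  best of these three outcomes: its effective bid \<open>max (v p) (v q)\<close> selects the cheaper
  payment mode (impressions iff \<open>q < p\<close>) and exceeds \<open>r\<close> exactly when that mode is
  profitable.  Conversely, any other bid has, for a suitable \<open>q\<close>, an effective bid different
  from the truthful one; a competing bid strictly between the two then makes it either lose a
  profitable slot or win an unprofitable one.\<close>

lemma exp_profit_le_best_outcome:
  "exp_profit v p q r m c \<le> max 0 (max (p * v - r) (p * v - p * (r / q)))"
  unfolding exp_profit_def by auto

lemma exp_profit_truthful:
  fixes v p q r :: real
  assumes "v > 0" "p > 0" "q > 0" "r \<ge> 0"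
  shows "exp_profit v p q r (v * p) v = max 0 (max (p * v - r) (p * v - p * (r / q)))"
proof (cases "q < p")
  case True
  then have "p * (r / q) \<ge> r"
    using assms by (simp add: le_divide_eq mult_right_mono mult.commute)
  moreover have "v * q < v * p" using True assms by simp
  ultimately show ?thesis
    unfolding exp_profit_def eff_bid_def by (auto simp: max_def mult.commute)
next
  case False
  then have "p * (r / q) \<le> r"
    using assms by (simp add: divide_le_eq mult_right_mono mult.commute)
  moreover have "r < v * q \<longleftrightarrow> p * (r / q) < p * v"
    using assms by (simp add: divide_less_eq mult.commute)
  moreover have "v * p \<le> v * q" using False assms by simp
  ultimately show ?thesis
    unfolding exp_profit_def eff_bid_def by (auto simp: max_def mult.commute)
qed

lemma exp_profit_le_truthful:
  fixes v p q r m c :: real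
  assumes "v > 0" "p > 0" "q > 0" "r \<ge> 0"
  shows "exp_profit v p q r m c \<le> exp_profit v p q r (v * p) v"
  using exp_profit_le_best_outcome exp_profit_truthful[OF assms] by simp

lemma exp_profit_lt_truthful_if_outbid:
  fixes v p q r m c :: real
  assumes "p > 0" "q > 0"
    and "eff_bid q m c \<le> r" "r < eff_bid q (v * p) v"
  shows "exp_profit v p q r m c < exp_profit v p q r (v * p) v"
proof -
  have "r < v * q \<Longrightarrow> p * (r / q) < p * v"
    using assms by (simp add: divide_less_eq mult.commute)
  then show ?thesis
    using assms unfolding exp_profit_def eff_bid_def by (auto simp: max_def mult.commute)
qed

lemma exp_profit_lt_truthful_if_overbid:
  fixes v p q r m c :: real
  assumes "p > 0" "q > 0"
    and "eff_bid q (v * p) v < r" "r < eff_bid q m c"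
  shows "exp_profit v p q r m c < exp_profit v p q r (v * p) v"
proof -
  have "v * p < r" using assms by (simp add: eff_bid_def)
  have "v < r / q" using assms by (simp add: eff_bid_def less_divide_eq mult.commute)
  then have "p * v < p * (r / q)" using \<open>p > 0\<close> by (rule mult_strict_left_mono)
  with \<open>v * p < r\<close> have "exp_profit v p q r m c < 0"
    using assms(4) by (simp add: exp_profit_def mult.commute)
  moreover have "exp_profit v p q r (v * p) v = 0"
    using assms(3) by (simp add: exp_profit_def)
  ultimately show ?thesis by simp
qed

lemma eff_bid_differs_from_truthful:
  fixes v p m c :: real
  assumes "v > 0" "p > 0" "m \<ge> 0" "(m, c) \<noteq> (v * p, v)"
  obtains q where "q > 0" "eff_bid q m c \<noteq> eff_bid q (v * p) v"
proof (cases "c = v")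
  case True
  \<comment> \<open>With \<open>q < p\<close> the truthful effective bid is \<open>v p\<close>, while \<open>max m (v q) = v p\<close> would force \<open>m = v p\<close>.\<close>
  have "v * (p / 2) < v * p" using assms by simp
  then have "max m (c * (p / 2)) \<noteq> max (v * p) (v * (p / 2))"
    using True assms by (auto simp: max_def)
  then show ?thesis using that[of "p / 2"] assms by (simp add: eff_bid_def)
next
  case False
  \<comment> \<open>For \<open>q\<close> this large the truthful effective bid is \<open>v q\<close>, which exceeds \<open>m\<close> and differs from \<open>c q\<close>.\<close>
  define q where "q = 1 + p + m / v"
  have "q > 0" using assms by (simp add: q_def add_pos_nonneg)
  have "v * q = v + v * p + m" using assms by (simp add: q_def distrib_left)
  moreover have "v * p > 0" using assms by simp
  ultimately have "m < v * q" "v * p < v * q" using assms by linarith+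
  moreover have "c * q \<noteq> v * q" using False \<open>q > 0\<close> by simp
  ultimately have "max m (c * q) \<noteq> max (v * p) (v * q)"
    using assms by (auto simp: max_def)
  then show ?thesis using that[of q] \<open>q > 0\<close> by (simp add: eff_bid_def)
qed

lemma exists_exp_profit_lt_truthful:
  fixes v p m c :: real
  assumes "v > 0" "p > 0" "m \<ge> 0" "(m, c) \<noteq> (v * p, v)"
  shows "\<exists>q r. q > 0 \<and> r \<ge> 0 \<and> exp_profit v p q r m c < exp_profit v p q r (v * p) v"
proof -
  obtain q where "q > 0" and differ: "eff_bid q m c \<noteq> eff_bid q (v * p) v"
    using eff_bid_differs_from_truthful assms by blast
  have eff_nonneg: "eff_bid q m c \<ge> 0" "eff_bid q (v * p) v \<ge> 0"
    using assms \<open>q > 0\<close> by (auto simp: eff_bid_def max_def)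
  consider "eff_bid q m c < eff_bid q (v * p) v" | "eff_bid q (v * p) v < eff_bid q m c"
    using differ by linarith
  then show ?thesis
  proof cases
    case 1
    then show ?thesis
      using exp_profit_lt_truthful_if_outbid[of p q m c "eff_bid q m c" v] assms \<open>q > 0\<close> eff_nonneg
      by auto
  next
    case 2
    define r where "r = (eff_bid q (v * p) v + eff_bid q m c) / 2"
    have "eff_bid q (v * p) v < r" "r < eff_bid q m c" using 2 by (simp_all add: r_def)
    then show ?thesis
      using exp_profit_lt_truthful_if_overbid[of p q v r m c] assms \<open>q > 0\<close> eff_nonneg
      by (intro exI[of _ q] exI[of _ r]) auto
  qed
qed

theorem theorem1:
  fixes v p :: real
  assumes "v > 0" and "p > 0"
  shows "(\<forall>q r m c. q > 0 \<longrightarrow> r \<ge> 0 \<longrightarrow> m \<ge> 0 \<longrightarrow> c \<ge> 0 \<longrightarrow>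
            exp_profit v p q r m c \<le> exp_profit v p q r (v * p) v)
       \<and> (\<forall>m c. m \<ge> 0 \<longrightarrow> c \<ge> 0 \<longrightarrow> (m, c) \<noteq> (v * p, v) \<longrightarrow>
            (\<exists>q r. q > 0 \<and> r \<ge> 0 \<and>
               exp_profit v p q r m c < exp_profit v p q r (v * p) v))"
  using exp_profit_le_truthful[OF assms] exists_exp_profit_lt_truthful[OF assms] by blast

end
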